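(* Fix a horizon $T$ (an even positive integer), a number of experts $n\ge 2$, and an error constant $\Delta\in(0,1]$. Then there exist a prompt $x$, a finite vocabulary $\mathcal{Y}$, deterministic expert policies $\pi_1,\dots,\pi_n$, and a family $\mathcal{R}$ of token-level reward functions $r$ with values in $[0,1]$ (all on the same deterministic token-level MDP described in the context) such that: (i) for every $r\in\mathcal{R}$, with $\pi^*$ a deterministic optimal policy for $r$, the following three properties hold: 1. (Existence of a near-optimal path) there exist $\varepsilon\in[0,1]$ with $\varepsilon\le\Delta$ and a routing sequence $P^*=(n_1^*,\dots,n_T^* )\in[n]^T$ such that $V^{\pi^*}(x)=V^{P^*}+\varepsilon$; 2. (Single policy coverage) for every $t\in\{0,\dots,T-1\}$, letting $y_{\le t}$ be the prefix generated by $\pi^*$ from $x$, $\Big|\max_{i\in[n]} Q^{\pi^*}\big(x,y_{\le t},\pi_i(x,y_{\le t})\big)-Q^{\pi^*}\big(x,y_{\le t},\pi^*(x,y_{\le t})\big)\Big|\le\Delta;$ 3. (Generalization coverage) for every prefix $(x,y_{\le t})$ with $t<T$ such that some full response $(x,y_{\le T})$ extending it satisfies $R(x,y_{\le T})\ge V^{\pi^*}(x)-\Delta$, the same inequality $\Big|\max_{i\in[n]} Q^{\pi^*}\big(x,y_{\le t},\pi_i(x,y_{\le t})\big)-Q^{\pi^*}\big(x,y_{\le t},\pi^*(x,y_{\le t})\big)\Big|\le\Delta$ holds; (ii) for every token-level routing algorithm $\mathcal{A}:\mathcal{O}\to[n]$ (with observations as defined in the context), there exists $r\in\mathcal{R}$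 such that $V^{\pi_{\mathcal{A}}}(x) < V^{\pi^*}(x)-T/2+2$, i.e. no such algorithm achieves $V^{\pi_{\mathcal{A}}}\ge V^{\pi^*}-T/2+2$ for all rewards in the family.
   Context: Token-level MDP for decoding: a prompt $x$, vocabulary $\mathcal{Y}$, states are prefixes $(x,y_{\le t})=(x,y_1,\dots,y_t)$, an action is the next token $y_{t+1}\in\mathcal{Y}$, transitions are deterministic: $(x,y_{\le t})\mapsto(x,y_{\le t},y_{t+1})$, responses have fixed length $T$. A reward function assigns $r(x,y_{\le t+1})\in[0,1]$ to each prefix; the total reward of a prefix is $R(x,y_{\le t})=\sum_{i=1}^t r(x,y_{\le i})$. For a deterministic policy $\pi$ (a map from prefixes to next tokens, written $\pi(x,y_{\le t})$), $V^{\pi}(x,y_{\le t})=\sum_{i=t+1}^T r(x,y_{\le i})$ along the continuation generated by $\pi$, and $Q^{\pi}(x,y_{\le t},y_{t+1})=r(x,y_{\le t+1})+V^{\pi}(x,y_{\le t+1})$; we also write $Q^{\pi}(x,y_{\le t+1})$ for $Q^{\pi}(x,y_{\le t},y_{t+1})$. $\pi^*$ is an optimal policy (maximizing $V$ from every state), $V^*=V^{\pi^*}$. Expert policies $\pi_1,\dots,\pi_n$ are deterministic. A routing sequence $P=(n_1,\dots,n_T)\in[n]^T$ generates the response $y_k=\pi_{n_k}(x,y_{\le k-1})$, and $V^{P}=R(x,y_{\le T})$ for that response. A token-level routing algorithm $\mathcal{A}:\mathcal{O}\to[n]$ works as follows: at each step $t=0,\dots,T-1$, at the currently visited prefix $(x,y_{\le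 t})$ it receives the observation $o_t=\{x,\ y_{\le t},\ \{Q^{\pi^*}(x,y_{\le k})\}_{k=1}^t,\ \{Q^{\pi^*}(x,y_{\le t},y)\}_{y\in\mathcal{Y}}\}$, outputs an expert index $n_{t+1}=\mathcal{A}(o_t)$, and the next token is $y_{t+1}=\pi_{n_{t+1}}(x,y_{\le t})$; $\mathcal{O}$ is the union over $t$ of the possible observations, and $\pi_{\mathcal{A}}$ is the resulting decoding policy with value $V^{\pi_{\mathcal{A}}}(x)=R(x,y_{\le T})$ for the generated response. *)

theory Defs
  imports Complex_Main
begin

text \<open>Tokens are natural numbers, the vocabulary is a
finite set Y of tokens, the prompt x is a natural number, a prefix y_{<=t} is a token list
of length t.\<close>

type_synonym policy = "nat \<Rightarrow> nat list \<Rightarrow> nat"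
type_synonym reward = "nat \<Rightarrow> nat list \<Rightarrow> real"

fun rollout :: "policy \<Rightarrow> nat \<Rightarrow> nat list \<Rightarrow> nat \<Rightarrow> nat list" where
  "rollout pol x ys 0 = ys"
| "rollout pol x ys (Suc k) = (let zs = rollout pol x ys k in zs @ [pol x zs])"

definition totR :: "reward \<Rightarrow> nat \<Rightarrow> nat list \<Rightarrow> real" where
  "totR r x ys = (\<Sum>i = 1..length ys. r x (take i ys))"

definition Vpi :: "nat \<Rightarrow> reward \<Rightarrow> policy \<Rightarrow> nat \<Rightarrow> nat list \<Rightarrow> real" where
  "Vpi T r pol x ys =
     (let zs = rollout pol x ys (T - length ys) in
      \<Sum>i \<in> {length ys <.. T}. r x (take i zs))"

definition Qpi :: "nat \<Rightarrow> reward \<Rightarrow> policy \<Rightarrow> nat \<Rightarrow> nat list \<Rightarrow> nat \<Rightarrow> real" where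
  "Qpi T r pol x ys y = r x (ys @ [y]) + Vpi T r pol x (ys @ [y])"

definition Qpref :: "nat \<Rightarrow> reward \<Rightarrow> policy \<Rightarrow> nat \<Rightarrow> nat list \<Rightarrow> real" where
  "Qpref T r pol x ys = Qpi T r pol x (butlast ys) (last ys)"

definition valid_prefix :: "nat set \<Rightarrow> nat \<Rightarrow> nat list \<Rightarrow> bool" where
  "valid_prefix Y T ys \<longleftrightarrow> set ys \<subseteq> Y \<and> length ys \<le> T"

definition valid_policy :: "nat set \<Rightarrow> nat \<Rightarrow> nat \<Rightarrow> policy \<Rightarrow> bool" where
  "valid_policy Y T x pol \<longleftrightarrow>
     (\<forall>ys. set ys \<subseteq> Y \<and> length ys < T \<longrightarrow> pol x ys \<in> Y)"

definition optimal_policy :: "nat set \<Rightarrow> nat \<Rightarrow> reward \<Rightarrow> nat \<Rightarrow> policy \<Rightarrow> bool" where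
  "optimal_policy Y T r x pol \<longleftrightarrow> valid_policy Y T x pol \<and>
     (\<forall>pol'. valid_policy Y T x pol' \<longrightarrow>
        (\<forall>ys. valid_prefix Y T ys \<longrightarrow> Vpi T r pol' x ys \<le> Vpi T r pol x ys))"

fun route_gen :: "(nat \<Rightarrow> policy) \<Rightarrow> nat list \<Rightarrow> nat \<Rightarrow> nat \<Rightarrow> nat list" where
  "route_gen pis P x 0 = []"
| "route_gen pis P x (Suc k) = (let ys = route_gen pis P x k in ys @ [pis (P ! k) x ys])"

definition VP :: "reward \<Rightarrow> (nat \<Rightarrow> policy) \<Rightarrow> nat list \<Rightarrow> nat \<Rightarrow> real" where
  "VP r pis P x = totR r x (route_gen pis P x (length P))"

text \<open>Observations o_t = (x, y_{<=t}, [Q*(x,y_{<=1}),...,Q*(x,y_{<=t})], y \<mapsto> Q*(x,y_{<=t},y) on Y).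
The last component is a partial map defined exactly on the vocabulary Y.\<close>
type_synonym observation = "nat \<times> nat list \<times> real list \<times> (nat \<Rightarrow> real option)"

definition observe :: "nat set \<Rightarrow> nat \<Rightarrow> reward \<Rightarrow> policy \<Rightarrow> nat \<Rightarrow> nat list \<Rightarrow> observation" where
  "observe Y T r pistar x ys =
     (x, ys, map (\<lambda>k. Qpref T r pistar x (take k ys)) [1..<Suc (length ys)],
      (\<lambda>y. if y \<in> Y then Some (Qpi T r pistar x ys y) else None))"

fun alg_gen :: "nat set \<Rightarrow> nat \<Rightarrow> reward \<Rightarrow> policy \<Rightarrow> (nat \<Rightarrow> policy)
      \<Rightarrow> (observation \<Rightarrow> nat) \<Rightarrow> nat \<Rightarrow> nat \<Rightarrow> nat list" where
  "alg_gen Y T r pistar pis A x 0 = []"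
| "alg_gen Y T r pistar pis A x (Suc t) =
     (let ys = alg_gen Y T r pistar pis A x t in
      ys @ [pis (A (observe Y T r pistar x ys)) x ys])"

definition V_alg :: "nat set \<Rightarrow> nat \<Rightarrow> reward \<Rightarrow> policy \<Rightarrow> (nat \<Rightarrow> policy)
      \<Rightarrow> (observation \<Rightarrow> nat) \<Rightarrow> nat \<Rightarrow> real" where
  "V_alg Y T r pistar pis A x = totR r x (alg_gen Y T r pistar pis A x T)"

definition coverage_at :: "nat \<Rightarrow> nat \<Rightarrow> reward \<Rightarrow> policy \<Rightarrow> (nat \<Rightarrow> policy) \<Rightarrow> nat
      \<Rightarrow> real \<Rightarrow> nat list \<Rightarrow> bool" where
  "coverage_at T n r pistar pis x \<Delta> ys \<longleftrightarrow>
     \<bar>Max ((\<lambda>i. Qpi T r pistar x ys (pis i x ys)) ` {1..n}) - Qpi T r pistar x ys (pistar x ys)\<bar> \<le> \<Delta>"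

end

theory Submission
  imports Defs
begin

(* Experts only ever emit the tokens 0 and 1, while token 2 always earns reward 1, so the optimal
   value is T. A hidden token a in {0,1} decides which expert-only responses are good: starting
   with a costs \<Delta> once and then earns 1 per step, so always routing to the expert that emits a
   is \<Delta>-optimal; starting with the other token costs \<Delta> at each of the first two steps and earns
   nothing afterwards. Such derailed prefixes are never within \<Delta> of optimal, and on every other
   prefix expert 1 is \<Delta>-optimal, which gives both coverage conditions. The rewards of single
   tokens, hence the first observation of a router, do not depend on a; choosing a against the
   router's first token leaves it a total reward of at most 2. *)

lemma length_rollout [simp]: "length (rollout pol x ys m) = length ys + m"
  by (induction m) (simp_all add: Let_def)

lemma rollout_add: "rollout pol x ys (m + k) = rollout pol x (rollout pol x ys m) k"
  by (induction k) (simp_all add: Let_def)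

lemma rollout_Suc_shift: "rollout pol x ys (Suc m) = rollout pol x (ys @ [pol x ys]) m"
  using rollout_add[of pol x ys 1 m] by simp

lemma rollout_extends: "\<exists>zs. rollout pol x ys m = ys @ zs"
  by (induction m) (auto simp: Let_def)

lemma rollout_const: "rollout (\<lambda>x ys. c) x ys m = ys @ replicate m c"
  by (induction m) (simp_all add: Let_def replicate_append_same)

lemma set_rollout_subset:
  assumes "valid_policy Y T x pol" "set ys \<subseteq> Y" "length ys + m \<le> T"
  shows "set (rollout pol x ys m) \<subseteq> Y"
  using assms(3)
proof (induction m)
  case (Suc m)
  then show ?case using assms(1) by (auto simp: Let_def valid_policy_def)
qed (use assms(2) in simp)

lemma totR_rollout_Nil: "totR r x (rollout pol x [] T) = Vpi T r pol x []"
  by (simp add: totR_def Vpi_def atLeastSucAtMost_greaterThanAtMost)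

lemma Vpi_le_remaining:
  assumes "\<forall>ys. r x ys \<le> 1" "length ys \<le> T"
  shows "Vpi T r pol x ys \<le> real T - real (length ys)"
proof -
  have "Vpi T r pol x ys \<le> real (card {length ys<..T}) * 1"
    unfolding Vpi_def Let_def by (rule sum_bounded_above) (use assms in auto)
  then show ?thesis using assms(2) by simp
qed

lemma Qpi_policy_eq_Vpi:
  assumes "length ys < T"
  shows "Qpi T r pol x ys (pol x ys) = Vpi T r pol x ys"
proof -
  let ?ys' = "ys @ [pol x ys]"
  obtain m where m: "T - length ys = Suc m" using assms by (metis Suc_diff_Suc)
  define zs where "zs = rollout pol x ?ys' m"
  have "take (Suc (length ys)) zs = ?ys'"
    using rollout_extends[of pol x ?ys' m] unfolding zs_def by auto
  moreover have "{length ys<..T} = insert (Suc (length ys)) {Suc (length ys)<..T}"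
    using assms by auto
  moreover have "T - length ?ys' = m" using m by simp
  ultimately show ?thesis
    unfolding Qpi_def Vpi_def Let_def m rollout_Suc_shift by (simp add: zs_def)
qed

lemma totR_le_first_two:
  assumes "2 \<le> length ys" "\<forall>i\<in>{3..length ys}. r x (take i ys) \<le> b"
  shows "totR r x ys \<le> r x (take 1 ys) + r x (take 2 ys) + (real (length ys) - 2) * b"
proof -
  have split: "{1..length ys} = insert 1 (insert 2 {3..length ys})" using assms(1) by auto
  have "(\<Sum>i=3..length ys. r x (take i ys)) \<le> real (card {3..length ys}) * b"
    by (rule sum_bounded_above) (use assms(2) in auto)
  then show ?thesis using assms(1) unfolding totR_def split by (simp add: of_nat_diff)
qed

lemma optimal_Vpi_eq_remaining:
  assumes opt: "optimal_policy Y T r x pistar" and "c \<in> Y"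
    and "\<forall>ys. r x ys \<le> 1" and "\<forall>ys. ys \<noteq> [] \<longrightarrow> last ys = c \<longrightarrow> r x ys = 1"
    and ys: "valid_prefix Y T ys"
  shows "Vpi T r pistar x ys = real T - real (length ys)"
proof (rule antisym)
  show "Vpi T r pistar x ys \<le> real T - real (length ys)"
    using Vpi_le_remaining assms(3) ys by (auto simp: valid_prefix_def)
next
  have "Vpi T r (\<lambda>x ys. c) x ys = (\<Sum>i\<in>{length ys<..T}. 1)"
    unfolding Vpi_def Let_def rollout_const
  proof (rule sum.cong)
    fix i assume "i \<in> {length ys<..T}"
    then have "take i (ys @ replicate (T - length ys) c) = ys @ replicate (i - length ys) c"
      and "0 < i - length ys"
      by (auto simp: take_replicate min_def)
    then show "r x (take i (ys @ replicate (T - length ys) c)) = 1"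
      using assms(4) by (metis append_is_Nil_conv last_appendR last_replicate replicate_empty
          not_gr0)
  qed simp
  also have "\<dots> = real T - real (length ys)" using ys by (simp add: valid_prefix_def)
  finally show "real T - real (length ys) \<le> Vpi T r pistar x ys"
    using opt ys \<open>c \<in> Y\<close> unfolding optimal_policy_def valid_policy_def by metis
qed

lemma coverage_atI:
  assumes "\<forall>i\<in>{1..n}. Qpi T r pistar x ys (pis i x ys) \<le> Qpi T r pistar x ys (pistar x ys)"
    and "j \<in> {1..n}"
    and "Qpi T r pistar x ys (pistar x ys) - \<Delta> \<le> Qpi T r pistar x ys (pis j x ys)"
  shows "coverage_at T n r pistar pis x \<Delta> ys"
proof -
  let ?M = "Max ((\<lambda>i. Qpi T r pistar x ys (pis i x ys)) ` {1..n})"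
  have "?M \<le> Qpi T r pistar x ys (pistar x ys)" using assms(1,2) by (subst Max_le_iff) auto
  moreover have "Qpi T r pistar x ys (pis j x ys) \<le> ?M" using assms(2) by (intro Max_ge) auto
  ultimately show ?thesis using assms(3) unfolding coverage_at_def by linarith
qed

lemma coverage_along_optimal_rollout:
  assumes "valid_policy Y T x pistar" and "0 \<le> \<Delta>"
    and gen: "\<forall>ys. set ys \<subseteq> Y \<and> length ys < T \<and>
             (\<exists>zs. set zs \<subseteq> Y \<and> length (ys @ zs) = T \<and>
                   totR r x (ys @ zs) \<ge> Vpi T r pistar x [] - \<Delta>)
             \<longrightarrow> coverage_at T n r pistar pis x \<Delta> ys"
    and "t < T"
  shows "coverage_at T n r pistar pis x \<Delta> (rollout pistar x [] t)"
proof -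
  let ?ys = "rollout pistar x [] t"
  obtain zs where zs: "rollout pistar x [] T = ?ys @ zs"
    using rollout_add[of pistar x "[]" t "T - t"] rollout_extends \<open>t < T\<close>
    by (metis le_add_diff_inverse less_imp_le)
  have "set (?ys @ zs) \<subseteq> Y"
    unfolding zs[symmetric] by (rule set_rollout_subset[OF assms(1)]) auto
  moreover have "length (?ys @ zs) = T" using zs[symmetric] by simp
  moreover have "totR r x (?ys @ zs) = Vpi T r pistar x []"
    using zs totR_rollout_Nil by metis
  ultimately show ?thesis
    using assms(2,4) by (intro gen[rule_format] conjI exI[of _ zs]) auto
qed

lemma route_gen_replicate:
  assumes "\<forall>x ys. pis j x ys = c" and "k \<le> T"
  shows "route_gen pis (replicate T j) x k = replicate k c"
  using assms(2) by (induction k) (simp_all add: Let_def assms(1) replicate_append_same)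

lemma length_alg_gen [simp]: "length (alg_gen Y T r pistar pis A x t) = t"
  by (induction t) (simp_all add: Let_def)

lemma set_alg_gen_subset:
  "\<forall>i x ys. pis i x ys \<in> S \<Longrightarrow> set (alg_gen Y T r pistar pis A x t) \<subseteq> S"
  by (induction t) (auto simp: Let_def)

lemma hd_alg_gen:
  "0 < t \<Longrightarrow> hd (alg_gen Y T r pistar pis A x t) = pis (A (observe Y T r pistar x [])) x []"
proof (induction t)
  case (Suc t)
  then show ?case
    by (cases "t = 0") (simp_all add: Let_def hd_append length_greater_0_conv[symmetric])
qed simp

definition trap_reward :: "real \<Rightarrow> nat \<Rightarrow> reward" where
  "trap_reward \<Delta> a x ys = (if ys = [] then 0
     else if length ys = 1 then (if hd ys = 2 then 1 else 1 - \<Delta>)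
     else if hd ys = a \<or> hd ys = 2 \<or> ys ! 1 = 2 \<or> last ys = 2 then 1
     else if length ys = 2 then 1 - \<Delta> else 0)"

definition expert :: "nat \<Rightarrow> policy" where
  "expert i x ys = (if i = 2 then 1 else 0)"

definition derailed :: "nat \<Rightarrow> nat list \<Rightarrow> bool" where
  "derailed a ys \<longleftrightarrow> 2 \<le> length ys \<and> hd ys \<noteq> a \<and> hd ys \<noteq> 2 \<and> ys ! 1 \<noteq> 2"

lemma trap_reward_bounds:
  "0 \<le> \<Delta> \<Longrightarrow> \<Delta> \<le> 1 \<Longrightarrow> 0 \<le> trap_reward \<Delta> a x ys \<and> trap_reward \<Delta> a x ys \<le> 1"
  by (simp add: trap_reward_def)

lemma trap_reward_singleton [simp]: "trap_reward \<Delta> a x [y] = (if y = 2 then 1 else 1 - \<Delta>)"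
  by (simp add: trap_reward_def)

lemma trap_reward_last_2: "ys \<noteq> [] \<Longrightarrow> last ys = 2 \<Longrightarrow> trap_reward \<Delta> a x ys = 1"
  by (cases ys rule: rev_cases) (auto simp: trap_reward_def)

lemma trap_reward_append_0_ge:
  "0 \<le> \<Delta> \<Longrightarrow> \<not> derailed a ys \<Longrightarrow> 1 - \<Delta> \<le> trap_reward \<Delta> a x (ys @ [0])"
  by (cases ys) (auto simp: trap_reward_def derailed_def nth_append Suc_le_eq)

lemma trap_reward_off_track:
  assumes "hd ys \<noteq> a" "2 \<notin> set ys" "3 \<le> length ys"
  shows "trap_reward \<Delta> a x ys = 0"
proof -
  have "ys \<noteq> []" using assms(3) by auto
  moreover have "ys ! 1 \<in> set ys" using assms(3) by (intro nth_mem) simp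
  ultimately have "hd ys \<noteq> 2" "ys ! 1 \<noteq> 2" "last ys \<noteq> 2"
    using assms(2) hd_in_set last_in_set by metis+
  then show ?thesis using assms(1,3) \<open>ys \<noteq> []\<close> by (simp add: trap_reward_def)
qed

lemma Vpi_trap:
  assumes "0 \<le> \<Delta>" "\<Delta> \<le> 1" "optimal_policy {0,1,2} T (trap_reward \<Delta> a) x pistar"
    "set ys \<subseteq> {0,1,2}" "length ys \<le> T"
  shows "Vpi T (trap_reward \<Delta> a) pistar x ys = real T - real (length ys)"
  by (rule optimal_Vpi_eq_remaining[OF assms(3), of 2])
    (use assms trap_reward_bounds trap_reward_last_2 in \<open>auto simp: valid_prefix_def\<close>)

lemma Qpi_trap:
  assumes "0 \<le> \<Delta>" "\<Delta> \<le> 1" "optimal_policy {0,1,2} T (trap_reward \<Delta> a) x pistar"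
    "set ys \<subseteq> {0,1,2}" "length ys < T" "y \<in> {0,1,2}"
  shows "Qpi T (trap_reward \<Delta> a) pistar x ys y
    = trap_reward \<Delta> a x (ys @ [y]) + (real T - real (length ys) - 1)"
  using Vpi_trap[OF assms(1-3), of "ys @ [y]"] assms(4-6) by (simp add: Qpi_def)

lemma coverage_trap:
  assumes "0 \<le> \<Delta>" "\<Delta> \<le> 1" "1 \<le> n" "optimal_policy {0,1,2} T (trap_reward \<Delta> a) x pistar"
    "set ys \<subseteq> {0,1,2}" "length ys < T" "\<not> derailed a ys"
  shows "coverage_at T n (trap_reward \<Delta> a) pistar expert x \<Delta> ys"
proof (rule coverage_atI)
  let ?Q = "Qpi T (trap_reward \<Delta> a) pistar x ys"
  have Qstar: "?Q (pistar x ys) = real T - real (length ys)"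
    using Qpi_policy_eq_Vpi Vpi_trap assms(1,2,4-6) by (metis less_imp_le)
  have Qexpert: "?Q (expert i x ys)
      = trap_reward \<Delta> a x (ys @ [expert i x ys]) + (real T - real (length ys) - 1)" for i
    by (rule Qpi_trap) (use assms in \<open>auto simp: expert_def\<close>)
  show "\<forall>i\<in>{1..n}. ?Q (expert i x ys) \<le> ?Q (pistar x ys)"
    unfolding Qstar Qexpert using trap_reward_bounds assms(1,2) by fastforce
  show "1 \<in> {1..n}" using assms(3) by simp
  show "?Q (pistar x ys) - \<Delta> \<le> ?Q (expert 1 x ys)"
    unfolding Qstar Qexpert using trap_reward_append_0_ge[OF assms(1,7), of x]
    by (simp add: expert_def)
qed

lemma totR_derailed_le:
  assumes "0 \<le> \<Delta>" "\<Delta> \<le> 1" "derailed a ys" "length (ys @ zs) = T"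
  shows "totR (trap_reward \<Delta> a) x (ys @ zs) \<le> real T - 2 * \<Delta>"
proof -
  have "2 \<le> length ys" using assms(3) by (simp add: derailed_def)
  obtain b c ws where ys: "ys = b # c # ws"
    using \<open>2 \<le> length ys\<close> by (metis Suc_le_length_iff numeral_2_eq_2)
  have "totR (trap_reward \<Delta> a) x (ys @ zs) \<le> trap_reward \<Delta> a x (take 1 (ys @ zs))
      + trap_reward \<Delta> a x (take 2 (ys @ zs)) + (real T - 2) * 1"
    using totR_le_first_two[of "ys @ zs" "trap_reward \<Delta> a" x 1] \<open>2 \<le> length ys\<close> assms(4)
      trap_reward_bounds[OF assms(1,2)] by simp
  moreover have "trap_reward \<Delta> a x (take 1 (ys @ zs)) = 1 - \<Delta>"
    and "trap_reward \<Delta> a x (take 2 (ys @ zs)) = 1 - \<Delta>"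
    using assms(3) by (auto simp: ys derailed_def trap_reward_def)
  ultimately show ?thesis by simp
qed

lemma trap_generalization_coverage:
  assumes "0 < \<Delta>" "\<Delta> \<le> 1" "1 \<le> n" "optimal_policy {0,1,2} T (trap_reward \<Delta> a) x pistar"
  shows "\<forall>ys. set ys \<subseteq> {0,1,2} \<and> length ys < T \<and>
             (\<exists>zs. set zs \<subseteq> {0,1,2} \<and> length (ys @ zs) = T \<and>
                   totR (trap_reward \<Delta> a) x (ys @ zs) \<ge> Vpi T (trap_reward \<Delta> a) pistar x [] - \<Delta>)
             \<longrightarrow> coverage_at T n (trap_reward \<Delta> a) pistar expert x \<Delta> ys"
proof (intro allI impI, elim conjE exE)
  fix ys zs
  assume ys: "set ys \<subseteq> {0,1,2}" "length ys < T" and "length (ys @ zs) = T"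
    and near: "totR (trap_reward \<Delta> a) x (ys @ zs) \<ge> Vpi T (trap_reward \<Delta> a) pistar x [] - \<Delta>"
  have "Vpi T (trap_reward \<Delta> a) pistar x [] = real T"
    using Vpi_trap[OF _ assms(2,4), of "[]"] assms(1) by simp
  then have "\<not> derailed a ys"
    using totR_derailed_le[of \<Delta> a ys zs T x] near \<open>length (ys @ zs) = T\<close> assms(1,2) by force
  then show "coverage_at T n (trap_reward \<Delta> a) pistar expert x \<Delta> ys"
    using coverage_trap assms ys by simp
qed

lemma trap_near_optimal_path:
  assumes "0 \<le> \<Delta>" "\<Delta> \<le> 1" "0 < T" "a \<in> {0,1}"
    and "optimal_policy {0,1,2} T (trap_reward \<Delta> a) x pistar"
  shows "Vpi T (trap_reward \<Delta> a) pistar x []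
    = VP (trap_reward \<Delta> a) expert (replicate T (Suc a)) x + \<Delta>"
proof -
  have "\<forall>x ys. expert (Suc a) x ys = a" using assms(4) by (auto simp: expert_def)
  then have "VP (trap_reward \<Delta> a) expert (replicate T (Suc a)) x
      = (\<Sum>i=1..T. trap_reward \<Delta> a x (replicate i a))"
    unfolding VP_def totR_def by (simp add: route_gen_replicate min_absorb1)
  also have "\<dots> = trap_reward \<Delta> a x [a] + (\<Sum>i=2..T. trap_reward \<Delta> a x (replicate i a))"
    using assms(3) by (simp add: sum.atLeast_Suc_atMost numeral_2_eq_2)
  also have "\<dots> = (1 - \<Delta>) + (\<Sum>i\<in>{2..T}. 1)"
    using assms(4) by (auto simp: trap_reward_def intro!: sum.cong)
  also have "\<dots> = real T - \<Delta>" using assms(3) by (simp add: of_nat_diff)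
  finally show ?thesis using Vpi_trap[OF assms(1,2,5), of "[]"] by simp
qed

lemma observe_trap_Nil:
  assumes "0 \<le> \<Delta>" "\<Delta> \<le> 1" "0 < T" "optimal_policy {0,1,2} T (trap_reward \<Delta> a) x pistar"
  shows "observe {0,1,2} T (trap_reward \<Delta> a) pistar x [] =
    (x, [], [], \<lambda>y. if y \<in> {0,1,2}
      then Some ((if y = 2 then 1 else 1 - \<Delta>) + (real T - 1)) else None)"
  using Qpi_trap[OF assms(1,2,4), of "[]"] assms(3) by (auto simp: observe_def)

lemma router_misses_some_trap:
  assumes "0 \<le> \<Delta>" "\<Delta> \<le> 1" "0 < T" "even T"
  shows "\<exists>a\<in>{0,1}. \<forall>pistar. optimal_policy {0,1,2} T (trap_reward \<Delta> a) x pistar \<longrightarrow>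
    V_alg {0,1,2} T (trap_reward \<Delta> a) pistar expert A x
      < Vpi T (trap_reward \<Delta> a) pistar x [] - real T / 2 + 2"
proof
  let ?obs = "(x, [], [], \<lambda>y. if y \<in> {0,1,2}
    then Some ((if y = 2 then 1 else 1 - \<Delta>) + (real T - 1)) else None)"
  define a where "a = 1 - expert (A ?obs) x []"
  show "a \<in> {0,1}" by (simp add: a_def expert_def)
  show "\<forall>pistar. optimal_policy {0,1,2} T (trap_reward \<Delta> a) x pistar \<longrightarrow>
    V_alg {0,1,2} T (trap_reward \<Delta> a) pistar expert A x
      < Vpi T (trap_reward \<Delta> a) pistar x [] - real T / 2 + 2"
  proof (intro allI impI)
    fix pistar assume opt: "optimal_policy {0,1,2} T (trap_reward \<Delta> a) x pistar"
    let ?zs = "alg_gen {0,1,2} T (trap_reward \<Delta> a) pistar expert A x T"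
    have "T \<ge> 2" using assms(3,4) by presburger
    have "hd ?zs \<noteq> a"
      using hd_alg_gen[OF assms(3)] observe_trap_Nil[OF assms(1-3) opt]
      by (simp add: a_def expert_def)
    moreover have "2 \<notin> set ?zs"
      using set_alg_gen_subset[of expert "{0,1}"] by (force simp: expert_def)
    ultimately have "trap_reward \<Delta> a x (take i ?zs) = 0" if "i \<in> {3..T}" for i
      using that by (intro trap_reward_off_track) (auto simp: hd_take dest: in_set_takeD)
    then have "V_alg {0,1,2} T (trap_reward \<Delta> a) pistar expert A x
        \<le> trap_reward \<Delta> a x (take 1 ?zs) + trap_reward \<Delta> a x (take 2 ?zs)"
      using totR_le_first_two[of ?zs "trap_reward \<Delta> a" x 0] \<open>T \<ge> 2\<close>
      by (simp add: V_alg_def)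
    also have "\<dots> \<le> 2"
      using trap_reward_bounds[OF assms(1,2), of a x "take 1 ?zs"]
        trap_reward_bounds[OF assms(1,2), of a x "take 2 ?zs"] by linarith
    finally show "V_alg {0,1,2} T (trap_reward \<Delta> a) pistar expert A x
      < Vpi T (trap_reward \<Delta> a) pistar x [] - real T / 2 + 2"
      using Vpi_trap[OF assms(1,2) opt, of "[]"] assms(3) by simp
  qed
qed

theorem theorem1:
  fixes T n :: nat and \<Delta> :: real
  assumes "even T" and "T > 0" and "n \<ge> 2" and "0 < \<Delta>" and "\<Delta> \<le> 1"
  shows "\<exists>(x::nat) (Y::nat set) (pis::nat \<Rightarrow> policy) (\<R>::reward set).
    finite Y \<and> Y \<noteq> {} \<and>
    (\<forall>i\<in>{1..n}. valid_policy Y T x (pis i)) \<and>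
    (\<forall>r\<in>\<R>. \<forall>ys. 0 \<le> r x ys \<and> r x ys \<le> 1) \<and>
    (\<forall>r\<in>\<R>. \<forall>pistar. optimal_policy Y T r x pistar \<longrightarrow>
       (\<exists>\<epsilon>. 0 \<le> \<epsilon> \<and> \<epsilon> \<le> 1 \<and> \<epsilon> \<le> \<Delta> \<and>
          (\<exists>P. length P = T \<and> set P \<subseteq> {1..n} \<and>
               Vpi T r pistar x [] = VP r pis P x + \<epsilon>)) \<and>
       (\<forall>t<T. coverage_at T n r pistar pis x \<Delta> (rollout pistar x [] t)) \<and>
       (\<forall>ys. set ys \<subseteq> Y \<and> length ys < T \<and>
             (\<exists>zs. set zs \<subseteq> Y \<and> length (ys @ zs) = T \<and>
                   totR r x (ys @ zs) \<ge> Vpi T r pistar x [] - \<Delta>)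
             \<longrightarrow> coverage_at T n r pistar pis x \<Delta> ys)) \<and>
    (\<forall>A::observation \<Rightarrow> nat. (\<forall>ob. A ob \<in> {1..n}) \<longrightarrow>
       (\<exists>r\<in>\<R>. \<forall>pistar. optimal_policy Y T r x pistar \<longrightarrow>
          V_alg Y T r pistar pis A x < Vpi T r pistar x [] - real T / 2 + 2))"
proof (intro exI[of _ "0::nat"] exI[of _ "{0::nat,1,2}"] exI[of _ expert]
    exI[of _ "trap_reward \<Delta> ` {0,1}"] conjI ballI allI impI)
  show "finite {0::nat,1,2}" "{0::nat,1,2} \<noteq> {}" by simp_all
  show "valid_policy {0,1,2} T 0 (expert i)" for i by (simp add: valid_policy_def expert_def)
  show "0 \<le> r 0 ys" "r 0 ys \<le> 1" if "r \<in> trap_reward \<Delta> ` {0,1}" for r ys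
    using that trap_reward_bounds assms(4,5) by auto
  show "\<exists>r\<in>trap_reward \<Delta> ` {0,1}. \<forall>pistar. optimal_policy {0,1,2} T r 0 pistar \<longrightarrow>
      V_alg {0,1,2} T r pistar expert A 0 < Vpi T r pistar 0 [] - real T / 2 + 2" for A
    using router_misses_some_trap[of \<Delta> T 0 A] assms by auto
  fix r pistar
  assume "r \<in> trap_reward \<Delta> ` {0,1}" and opt: "optimal_policy {0,1,2} T r 0 pistar"
  then obtain a where a: "a \<in> {0,1}" "r = trap_reward \<Delta> a" by blast
  show "\<exists>\<epsilon>. 0 \<le> \<epsilon> \<and> \<epsilon> \<le> 1 \<and> \<epsilon> \<le> \<Delta> \<and> (\<exists>P. length P = T \<and> set P \<subseteq> {1..n} \<and>
      Vpi T r pistar 0 [] = VP r expert P 0 + \<epsilon>)"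
    using trap_near_optimal_path[of \<Delta> T a 0 pistar] a opt assms
    by (intro exI[of _ \<Delta>] conjI exI[of _ "replicate T (Suc a)"]) auto
  note generalization = trap_generalization_coverage[OF assms(4,5) _ opt[unfolded a(2)]]
  show "coverage_at T n r pistar expert 0 \<Delta> ys"
    if "set ys \<subseteq> {0,1,2} \<and> length ys < T \<and> (\<exists>zs. set zs \<subseteq> {0,1,2} \<and> length (ys @ zs) = T \<and>
      totR r 0 (ys @ zs) \<ge> Vpi T r pistar 0 [] - \<Delta>)" for ys
    using generalization that assms(3) a(2) by simp
  show "coverage_at T n r pistar expert 0 \<Delta> (rollout pistar 0 [] t)" if "t < T" for t
    using coverage_along_optimal_rollout[OF _ _ generalization that] opt assms(3,4) a(2)
    by (simp add: optimal_policy_def)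
qed

end
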